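(* For every integer $T\ge 5$ and every $\sigma\in\mathfrak S_3$, the vector $\sigma c$ with $c=[T,\,T,\,-(T-2),\,1,\,-(T-2),\,1]$ defines a facet of $P^T$.
   Context: For an integer $T\ge 2$, let $\Omega_T$ be the set of words $w=s_1s_2\cdots s_T$ over $\{1,2,3\}$ with $s_l\neq s_{l+1}$ for $l=1,\dots,T-1$. For $w\in\Omega_T$ and an ordered pair $ij$, $i\neq j$, let $x_{ij}(w)$ be the number of indices $1\le l\le T-1$ with $s_ls_{l+1}=ij$. Vectors of $\mathbb R^6$ are indexed in the order $[x_{12},x_{13},x_{21},x_{23},x_{31},x_{32}]$. Let $a_w=[x_{12}(w),\dots,x_{32}(w)]$ and $P^T=\mathrm{conv}\{a_w:w\in\Omega_T\}$. $\mathfrak S_3$ acts on $\mathbb R^6$ by $(\sigma c)_{ij}=c_{\sigma(i)\sigma(j)}$. A vector $c$ defines a facet of $P^T$ if $c\cdot a_w\ge0$ for all $w\in\Omega_T$ and $\{x\in P^T: c\cdot x=0\}$ is a facet of $P^T$. *)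

theory Defs
  imports "HOL-Analysis.Analysis" "HOL-Combinatorics.Permutations"
begin

datatype pidx = P12 | P13 | P21 | P23 | P31 | P32

lemma UNIV_pidx: "(UNIV :: pidx set) = {P12, P13, P21, P23, P31, P32}"
  using pidx.exhaust by auto

instance pidx :: finite
  by standard (simp add: UNIV_pidx)

fun pr :: "pidx \<Rightarrow> nat \<times> nat" where
  "pr P12 = (1,2)" | "pr P13 = (1,3)" | "pr P21 = (2,1)"
| "pr P23 = (2,3)" | "pr P31 = (3,1)" | "pr P32 = (3,2)"

text \<open>Words s_1 ... s_T over {1,2,3} with no two equal consecutive letters
  (stored 0-indexed as lists).\<close>
definition Omega :: "nat \<Rightarrow> nat list set" where
  "Omega T = {w. length w = T \<and> set w \<subseteq> {1,2,3} \<and>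
                 (\<forall>l. l + 1 < T \<longrightarrow> w ! l \<noteq> w ! (l + 1))}"

definition xcount :: "nat list \<Rightarrow> nat \<Rightarrow> nat \<Rightarrow> nat" where
  "xcount w i j = card {l. l + 1 < length w \<and> w ! l = i \<and> w ! (l + 1) = j}"

definition avec :: "nat list \<Rightarrow> real ^ pidx" where
  "avec w = (\<chi> k. real (xcount w (fst (pr k)) (snd (pr k))))"

definition PT :: "nat \<Rightarrow> (real ^ pidx) set" where
  "PT T = convex hull (avec ` Omega T)"

definition pact :: "(nat \<Rightarrow> nat) \<Rightarrow> real ^ pidx \<Rightarrow> real ^ pidx" where
  "pact \<sigma> c = (\<chi> k. c $ (THE k'. pr k' = (\<sigma> (fst (pr k)), \<sigma> (snd (pr k)))))"

definition defines_facet :: "nat \<Rightarrow> real ^ pidx \<Rightarrow> bool" where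
  "defines_facet T c \<longleftrightarrow>
     (\<forall>w \<in> Omega T. c \<bullet> avec w \<ge> 0) \<and> {x \<in> PT T. c \<bullet> x = 0} facet_of PT T"

definition cvec :: "nat \<Rightarrow> real ^ pidx" where
  "cvec T = (\<chi> k. case k of P12 \<Rightarrow> real T | P13 \<Rightarrow> real T | P21 \<Rightarrow> - (real T - 2)
                     | P23 \<Rightarrow> 1 | P31 \<Rightarrow> - (real T - 2) | P32 \<Rightarrow> 1)"

end

theory Submission
  imports Defs
begin

text \<open>Let r be the letter with \<sigma> r = 1. Then \<sigma> c has entries
  c_ij = 1 + (T - 1)([i = r] - [j = r]). A word of length T has T - 1 transitions, and the
  number of transitions leaving r minus the number entering r is [s_1 = r] - [s_T = r]; hence
  c \<cdot> a_w = (T - 1)(1 + [s_1 = r] - [s_T = r]) \<ge> 0, with equality iff w ends but does not start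
  with r. All a_w lie on the hyperplane \<Sum> x = T - 1, so dim P^T \<le> 5. The five words
  prq\<cdot>u, pqr\<cdot>u, qrq\<cdot>u, qpr\<cdot>u, qpq\<cdot>u with the common suffix u = pqpq\<dots>r give affinely independent
  points of the face, which is proper since words starting with r lie off it; so it is a facet.\<close>

lemma xcount_Nil [simp]: "xcount [] i j = 0"
  by (simp add: xcount_def)

lemma xcount_singleton [simp]: "xcount [a] i j = 0"
  by (simp add: xcount_def)

lemma xcount_Cons_Cons [simp]:
  "xcount (a # b # w) i j = of_bool (a = i \<and> b = j) + xcount (b # w) i j"
proof -
  let ?S = "\<lambda>w. {l. l + 1 < length w \<and> w ! l = i \<and> w ! (l + 1) = j}"
  have "?S (a # b # w) = (if a = i \<and> b = j then {0} else {}) \<union> Suc ` ?S (b # w)"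
  proof (rule set_eqI)
    fix l show "l \<in> ?S (a # b # w) \<longleftrightarrow> l \<in> (if a = i \<and> b = j then {0} else {}) \<union> Suc ` ?S (b # w)"
      by (cases l) auto
  qed
  moreover have "0 \<notin> Suc ` ?S (b # w)"
    by blast
  ultimately show ?thesis
    by (simp add: xcount_def card_image)
qed

lemma xcount_diag:
  assumes "successively (\<noteq>) w"
  shows "xcount w i i = 0"
  using assms by (induction w rule: induct_list012) auto

lemma sum_of_bool_eq_point:
  assumes "finite A" "a \<in> A"
  shows "(\<Sum>i\<in>A. of_bool (a = i \<and> P)) = of_bool P"
    and "(\<Sum>i\<in>A. of_bool (P \<and> a = i)) = of_bool P"
    and "(\<Sum>i\<in>A. of_bool (a = i)) = 1"
proof -
  have "(\<Sum>i\<in>A. of_bool (a = i \<and> P)) = (\<Sum>i\<in>A. if a = i then of_bool P else 0)"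
       "(\<Sum>i\<in>A. of_bool (P \<and> a = i)) = (\<Sum>i\<in>A. if a = i then of_bool P else 0)"
       "(\<Sum>i\<in>A. of_bool (a = i)) = (\<Sum>i\<in>A. if a = i then 1 else 0)"
    by (auto intro: sum.cong)
  with assms show "(\<Sum>i\<in>A. of_bool (a = i \<and> P)) = of_bool P"
    "(\<Sum>i\<in>A. of_bool (P \<and> a = i)) = of_bool P" "(\<Sum>i\<in>A. of_bool (a = i)) = 1"
    by simp_all
qed

lemma sum_xcount:
  assumes "finite A" "set w \<subseteq> A"
  shows "(\<Sum>i\<in>A. \<Sum>j\<in>A. xcount w i j) = length w - 1"
  using assms(2)
proof (induction w rule: induct_list012)
  case (3 a b w)
  then have "a \<in> A" "b \<in> A" by auto
  have "(\<Sum>i\<in>A. \<Sum>j\<in>A. xcount (a # b # w) i j)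
        = (\<Sum>i\<in>A. \<Sum>j\<in>A. of_bool (a = i \<and> b = j)) + (\<Sum>i\<in>A. \<Sum>j\<in>A. xcount (b # w) i j)"
    by (simp only: xcount_Cons_Cons sum.distrib)
  also have "(\<Sum>i\<in>A. \<Sum>j\<in>A. of_bool (a = i \<and> b = j)) = (1::nat)"
    using assms(1) \<open>a \<in> A\<close> \<open>b \<in> A\<close> by (simp only: sum_of_bool_eq_point)
  finally show ?case
    using 3 by simp
qed auto

lemma xcount_in_minus_out:
  assumes "finite A" "set w \<subseteq> A" "w \<noteq> []"
  shows "(\<Sum>i\<in>A. real (xcount w i r)) - (\<Sum>j\<in>A. real (xcount w r j))
         = of_bool (last w = r) - of_bool (hd w = r)"
  using assms(2,3)
proof (induction w rule: induct_list012)
  case (3 a b w)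
  then have "a \<in> A" "b \<in> A" by auto
  have "(\<Sum>i\<in>A. real (xcount (a # b # w) i r)) = of_bool (b = r) + (\<Sum>i\<in>A. real (xcount (b # w) i r))"
    "(\<Sum>j\<in>A. real (xcount (a # b # w) r j)) = of_bool (a = r) + (\<Sum>j\<in>A. real (xcount (b # w) r j))"
    using assms(1) \<open>a \<in> A\<close> \<open>b \<in> A\<close>
    by (simp_all only: xcount_Cons_Cons of_nat_add of_nat_of_bool sum.distrib sum_of_bool_eq_point)
  then show ?case
    using 3 by simp
qed auto

lemma Omega_iff:
  "w \<in> Omega T \<longleftrightarrow> length w = T \<and> set w \<subseteq> {1, 2, 3} \<and> successively (\<noteq>) w"
  unfolding Omega_def successively_conv_nth by auto

lemma sum_pidx:
  assumes "\<And>i. g i i = (0 :: 'a :: comm_monoid_add)"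
  shows "(\<Sum>k\<in>UNIV. g (fst (pr k)) (snd (pr k))) = (\<Sum>i\<in>{1, 2, 3}. \<Sum>j\<in>{1, 2, 3}. g i j)"
  using assms by (simp add: UNIV_pidx ac_simps)

definition cvec_at :: "nat \<Rightarrow> nat \<Rightarrow> real ^ pidx" where
  "cvec_at T r = (\<chi> k. 1 + (real T - 1) * (of_bool (fst (pr k) = r) - of_bool (snd (pr k) = r)))"

lemma cvec_eq_cvec_at: "cvec T = cvec_at T 1"
  unfolding vec_eq_iff cvec_def cvec_at_def
  by (intro allI, case_tac i) simp_all

lemma sum_cost_xcount:
  fixes X :: "nat \<Rightarrow> nat \<Rightarrow> real"
  assumes "finite A" "r \<in> A"
  shows "(\<Sum>i\<in>A. \<Sum>j\<in>A. (1 + c * (of_bool (i = r) - of_bool (j = r))) * X i j)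
         = (\<Sum>i\<in>A. \<Sum>j\<in>A. X i j) + c * ((\<Sum>j\<in>A. X r j) - (\<Sum>i\<in>A. X i r))"
proof -
  have "(1 + c * (of_bool (i = r) - of_bool (j = r))) * X i j
        = X i j + c * (if i = r then X i j else 0) - c * (if j = r then X i j else 0)" for i j
    by (simp add: algebra_simps)
  then have "(\<Sum>i\<in>A. \<Sum>j\<in>A. (1 + c * (of_bool (i = r) - of_bool (j = r))) * X i j)
        = (\<Sum>i\<in>A. \<Sum>j\<in>A. X i j) + c * (\<Sum>i\<in>A. \<Sum>j\<in>A. if i = r then X i j else 0)
          - c * (\<Sum>i\<in>A. \<Sum>j\<in>A. if j = r then X i j else 0)"
    by (simp only: sum.distrib sum_subtractf sum_distrib_left)
  also have "(\<Sum>i\<in>A. \<Sum>j\<in>A. if i = r then X i j else 0) = (\<Sum>i\<in>A. if i = r then \<Sum>j\<in>A. X i j else 0)"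
    by (rule sum.cong) simp_all
  also have "\<dots> = (\<Sum>j\<in>A. X r j)"
    using assms by simp
  also have "(\<Sum>i\<in>A. \<Sum>j\<in>A. if j = r then X i j else 0) = (\<Sum>i\<in>A. X i r)"
    using assms by simp
  finally show ?thesis
    by (simp add: algebra_simps)
qed

lemma inner_cvec_at_avec:
  assumes w: "w \<in> Omega T" and "T \<ge> 1" and r: "r \<in> {1, 2, 3}"
  shows "cvec_at T r \<bullet> avec w = (real T - 1) * (1 + of_bool (hd w = r) - of_bool (last w = r))"
proof -
  have len: "length w = T" and set: "set w \<subseteq> {1, 2, 3}" and "successively (\<noteq>) w"
    using w by (auto simp: Omega_iff)
  then have diag: "xcount w i i = 0" for i
    by (simp add: xcount_diag)
  define X where "X i j = real (xcount w i j)" for i j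
  have total: "(\<Sum>i\<in>{1, 2, 3}. \<Sum>j\<in>{1, 2, 3}. X i j) = real T - 1"
    using sum_xcount[OF _ set] len \<open>T \<ge> 1\<close> by (simp add: X_def flip: of_nat_sum)
  have flow: "(\<Sum>j\<in>{1, 2, 3}. X r j) - (\<Sum>i\<in>{1, 2, 3}. X i r) = of_bool (hd w = r) - of_bool (last w = r)"
    using xcount_in_minus_out[OF _ set, of r] len \<open>T \<ge> 1\<close> unfolding X_def by fastforce
  define g where "g i j = (1 + (real T - 1) * (of_bool (i = r) - of_bool (j = r))) * X i j" for i j
  have "cvec_at T r \<bullet> avec w = (\<Sum>k\<in>UNIV. g (fst (pr k)) (snd (pr k)))"
    unfolding inner_vec_def cvec_at_def avec_def g_def X_def by simp
  also have "\<dots> = (\<Sum>i\<in>{1, 2, 3}. \<Sum>j\<in>{1, 2, 3}. g i j)"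
    by (rule sum_pidx) (simp add: g_def X_def diag)
  also have "\<dots> = (\<Sum>i\<in>{1, 2, 3}. \<Sum>j\<in>{1, 2, 3}. X i j)
                    + (real T - 1) * ((\<Sum>j\<in>{1, 2, 3}. X r j) - (\<Sum>i\<in>{1, 2, 3}. X i r))"
    unfolding g_def using r by (intro sum_cost_xcount) simp_all
  also have "\<dots> = (real T - 1) * (1 + of_bool (hd w = r) - of_bool (last w = r))"
    unfolding total flow by (simp add: algebra_simps)
  finally show ?thesis .
qed

lemma inner_one_avec:
  assumes w: "w \<in> Omega T" and "T \<ge> 1"
  shows "(\<chi> k. 1) \<bullet> avec w = real T - 1"
proof -
  have len: "length w = T" and set: "set w \<subseteq> {1, 2, 3}" and "successively (\<noteq>) w"
    using w by (auto simp: Omega_iff)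
  then have diag: "xcount w i i = 0" for i
    by (simp add: xcount_diag)
  have "(\<chi> k. 1) \<bullet> avec w = (\<Sum>k\<in>UNIV. real (xcount w (fst (pr k)) (snd (pr k))))"
    by (simp add: inner_vec_def avec_def)
  also have "\<dots> = (\<Sum>i\<in>{1, 2, 3}. \<Sum>j\<in>{1, 2, 3}. real (xcount w i j))"
    by (rule sum_pidx) (simp add: diag)
  also have "\<dots> = real T - 1"
    using sum_xcount[OF _ set] len \<open>T \<ge> 1\<close> by (simp flip: of_nat_sum)
  finally show ?thesis .
qed

lemma inj_pr: "inj pr"
  by (rule injI) (case_tac x; case_tac y; simp)

lemma range_pr: "range pr = {(i, j). i \<in> {1, 2, 3} \<and> j \<in> {1, 2, 3} \<and> i \<noteq> j}"
  by (auto simp: UNIV_pidx)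

lemma pact_cvec_at:
  assumes "\<sigma> permutes {1, 2, 3}"
  shows "pact \<sigma> (cvec_at T (\<sigma> r)) = cvec_at T r"
proof -
  have \<sigma>_eq: "\<sigma> i = \<sigma> j \<longleftrightarrow> i = j" for i j
    using permutes_inj[OF assms] by (auto dest: injD)
  have "pact \<sigma> (cvec_at T (\<sigma> r)) $ k = cvec_at T r $ k" for k
  proof -
    obtain i j where k: "pr k = (i, j)" by force
    then have "(i, j) \<in> range pr" by (metis rangeI)
    then have "(\<sigma> i, \<sigma> j) \<in> range pr"
      using permutes_in_image[OF assms] \<sigma>_eq by (auto simp: range_pr)
    then obtain k' where k': "pr k' = (\<sigma> i, \<sigma> j)" by force
    have "(THE k'. pr k' = (\<sigma> i, \<sigma> j)) = k'"
      using k' injD[OF inj_pr] by (intro the_equality) auto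
    then show ?thesis
      by (simp add: pact_def cvec_at_def k k' \<sigma>_eq)
  qed
  then show ?thesis
    by (simp add: vec_eq_iff)
qed

lemma facet_of_convex_hull_supporting_hyperplane:
  fixes c :: "'a :: euclidean_space"
  assumes "\<And>x. x \<in> S \<Longrightarrow> c \<bullet> x \<ge> 0" "y \<in> S" "c \<bullet> y \<noteq> 0"
    and "{x \<in> convex hull S. c \<bullet> x = 0} \<noteq> {}"
    and "aff_dim (convex hull S) \<le> aff_dim {x \<in> convex hull S. c \<bullet> x = 0} + 1"
  shows "{x \<in> convex hull S. c \<bullet> x = 0} facet_of convex hull S"
proof -
  let ?F = "{x \<in> convex hull S. c \<bullet> x = 0}"
  have "convex hull S \<subseteq> {x. c \<bullet> x \<ge> 0}"
    using assms(1) by (intro hull_minimal) (auto simp: convex_halfspace_ge)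
  then have "convex hull S \<inter> {x. c \<bullet> x = 0} face_of convex hull S"
    by (intro face_of_Int_supporting_hyperplane_ge) auto
  then have face: "?F face_of convex hull S"
    by (simp add: Int_def conj_commute)
  moreover have "?F \<noteq> convex hull S"
    using assms(2,3) hull_inc[of y S] by blast
  then have "aff_dim ?F < aff_dim (convex hull S)"
    by (intro face_of_aff_dim_lt face) simp_all
  ultimately show ?thesis
    using assms(4,5) by (simp add: facet_of_def)
qed

lemma aff_dim_PT_le:
  assumes "T \<ge> 1"
  shows "aff_dim (PT T) \<le> 5"
proof -
  have "PT T \<subseteq> {x. (\<chi> k. 1) \<bullet> x = real T - 1}"
    unfolding PT_def
    by (rule hull_minimal) (use inner_one_avec assms in \<open>auto simp: convex_hyperplane\<close>)
  then have "aff_dim (PT T) \<le> aff_dim {x. ((\<chi> k. 1) :: real ^ pidx) \<bullet> x = real T - 1}"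
    by (rule aff_dim_subset)
  also have "\<dots> = 5"
    by (simp add: vec_eq_iff UNIV_pidx)
  finally show ?thesis .
qed

definition edge_vec :: "nat \<Rightarrow> nat \<Rightarrow> real ^ pidx" where
  "edge_vec a b = (\<chi> k. of_bool (pr k = (a, b)))"

lemma avec_Cons_Cons: "avec (a # b # w) = edge_vec a b + avec (b # w)"
  by (auto simp: vec_eq_iff avec_def edge_vec_def)

lemma affine_independent_edge_sums:
  assumes "p \<in> {1, 2, 3}" "q \<in> {1, 2, 3}" "r \<in> {1, 2, 3}" "p \<noteq> q" "p \<noteq> r" "q \<noteq> r"
  defines "S \<equiv> {edge_vec p r + edge_vec r q + edge_vec q p, edge_vec p q + edge_vec q r + edge_vec r p,
                 edge_vec q r + edge_vec r q + edge_vec q p, edge_vec q p + edge_vec p r + edge_vec r p,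
                 edge_vec q p + edge_vec p q + edge_vec q p}"
  shows "aff_dim S = 4"
proof -
  have in_range: "(i, j) \<in> range pr" if "i \<in> {p, q, r}" "j \<in> {p, q, r}" "i \<noteq> j" for i j
    using that assms(1-3) by (auto simp: range_pr)
  obtain k1 k2 k3 k4 k5 k6 where k: "pr k1 = (p, r)" "pr k2 = (r, q)" "pr k3 = (q, p)"
      "pr k4 = (p, q)" "pr k5 = (q, r)" "pr k6 = (r, p)"
    using in_range assms(4-6) by (metis insertI1 insertI2 rangeE)
  let ?coords = "\<lambda>u. (u $ k1, u $ k2, u $ k3, u $ k4, u $ k5, u $ k6)"
  define uA uB uC uD uE where "uA = edge_vec p r + edge_vec r q + edge_vec q p"
    and "uB = edge_vec p q + edge_vec q r + edge_vec r p"
    and "uC = edge_vec q r + edge_vec r q + edge_vec q p"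
    and "uD = edge_vec q p + edge_vec p r + edge_vec r p"
    and "uE = edge_vec q p + edge_vec p q + edge_vec q p"
  have coords: "?coords uA = (1, 1, 1, 0, 0, 0)" "?coords uB = (0, 0, 0, 1, 1, 1)"
    "?coords uC = (0, 1, 1, 0, 1, 0)" "?coords uD = (1, 0, 1, 0, 0, 1)"
    "?coords uE = (0, 0, 2, 1, 0, 0)"
    using assms(4-6) by (simp_all add: uA_def uB_def uC_def uD_def uE_def edge_vec_def k)
  then have distinct: "distinct [uA, uB, uC, uD, uE]"
    by auto
  have "\<not> affine_dependent {uA, uB, uC, uD, uE}"
  proof
    assume "affine_dependent {uA, uB, uC, uD, uE}"
    then obtain U where sum_U: "sum U {uA, uB, uC, uD, uE} = 0"
      and nonzero: "\<exists>v\<in>{uA, uB, uC, uD, uE}. U v \<noteq> 0"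
      and comb: "(\<Sum>v\<in>{uA, uB, uC, uD, uE}. U v *\<^sub>R v) = 0"
      by (auto simp: affine_dependent_explicit_finite)
    have "U uA * uA $ k + U uB * uB $ k + U uC * uC $ k + U uD * uD $ k + U uE * uE $ k = 0" for k
      using arg_cong[OF comb, of "\<lambda>v. v $ k"] distinct by simp
    from this[of k1] this[of k2] this[of k3] this[of k4] this[of k5] this[of k6]
    have "U uA = 0" "U uB = 0" "U uC = 0" "U uD = 0" "U uE = 0"
      using sum_U coords distinct by simp_all
    then show False
      using nonzero by auto
  qed
  then have "of_nat (card {uA, uB, uC, uD, uE}) = aff_dim {uA, uB, uC, uD, uE} + 1"
    by (rule aff_dim_affine_independent)
  then show ?thesis
    using distinct by (simp add: S_def uA_def uB_def uC_def uD_def uE_def)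
qed

fun alternating :: "nat \<Rightarrow> nat \<Rightarrow> nat \<Rightarrow> nat list" where
  "alternating p q 0 = []"
| "alternating p q (Suc n) = p # alternating q p n"

lemma length_alternating [simp]: "length (alternating p q n) = n"
  by (induction n arbitrary: p q) auto

lemma set_alternating: "set (alternating p q n) \<subseteq> {p, q}"
  by (induction n arbitrary: p q) auto

lemma successively_alternating_snoc:
  "p \<noteq> q \<Longrightarrow> r \<noteq> p \<Longrightarrow> r \<noteq> q \<Longrightarrow> successively (\<noteq>) (alternating p q n @ [r])"
proof (induction n arbitrary: p q)
  case (Suc n)
  then show ?case
    by (cases n) (auto simp: successively_Cons)
qed simp

lemma word_in_Omega:
  assumes "n \<ge> 1" "{a, b, c, p, q, r} \<subseteq> {1, 2, 3}"
    and "a \<noteq> b" "b \<noteq> c" "c \<noteq> p" "p \<noteq> q" "r \<noteq> p" "r \<noteq> q"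
  shows "a # b # c # alternating p q n @ [r] \<in> Omega (n + 4)"
proof -
  obtain m where n: "n = Suc m"
    using assms(1) by (cases n) auto
  have "successively (\<noteq>) (alternating p q n @ [r])"
    using successively_alternating_snoc assms(6-8) by blast
  moreover have "set (alternating p q n) \<subseteq> {1, 2, 3}"
    using set_alternating[of p q n] assms(2) by blast
  ultimately show ?thesis
    using assms(2-5) n by (auto simp: Omega_iff successively_Cons)
qed

lemma avec_word:
  assumes "n \<ge> 1"
  shows "avec (a # b # c # alternating p q n @ [r])
         = edge_vec a b + edge_vec b c + edge_vec c p + avec (alternating p q n @ [r])"
proof -
  obtain m where "n = Suc m"
    using assms by (cases n) auto
  then show ?thesis
    by (simp add: avec_Cons_Cons add.assoc)
qed

lemma aff_dim_cvec_at_face_ge: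
  assumes "T \<ge> 5" "p \<in> {1, 2, 3}" "q \<in> {1, 2, 3}" "r \<in> {1, 2, 3}" "p \<noteq> q" "p \<noteq> r" "q \<noteq> r"
  shows "4 \<le> aff_dim {x \<in> PT T. cvec_at T r \<bullet> x = 0}"
proof -
  define F where "F = alternating p q (T - 4) @ [r]"
  have "T - 4 \<ge> 1" "T - 4 + 4 = T"
    using assms(1) by simp_all
  have vertex: "edge_vec a b + edge_vec b c + edge_vec c p + avec F \<in> {x \<in> PT T. cvec_at T r \<bullet> x = 0}"
    if "{a, b, c} \<subseteq> {1, 2, 3}" "a \<noteq> b" "b \<noteq> c" "c \<noteq> p" "a \<noteq> r" for a b c
  proof -
    have w: "a # b # c # F \<in> Omega T"
      using word_in_Omega[OF \<open>T - 4 \<ge> 1\<close>, of a b c p q r] that assms \<open>T - 4 + 4 = T\<close>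
      by (simp add: F_def)
    then have "cvec_at T r \<bullet> avec (a # b # c # F) = 0"
      using inner_cvec_at_avec[OF w] assms(1,4) \<open>a \<noteq> r\<close> by (simp add: F_def)
    moreover have "avec (a # b # c # F) \<in> PT T"
      using w by (simp add: PT_def hull_inc)
    ultimately show ?thesis
      using avec_word[OF \<open>T - 4 \<ge> 1\<close>] by (simp add: F_def add.assoc)
  qed
  let ?S = "{edge_vec p r + edge_vec r q + edge_vec q p, edge_vec p q + edge_vec q r + edge_vec r p,
             edge_vec q r + edge_vec r q + edge_vec q p, edge_vec q p + edge_vec p r + edge_vec r p,
             edge_vec q p + edge_vec p q + edge_vec q p}"
  have "(+) (avec F) ` ?S \<subseteq> {x \<in> PT T. cvec_at T r \<bullet> x = 0}"
    using vertex[of p r q] vertex[of p q r] vertex[of q r q] vertex[of q p r] vertex[of q p q] assms(2-7)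
    by (simp add: add.commute)
  then have "aff_dim ((+) (avec F) ` ?S) \<le> aff_dim {x \<in> PT T. cvec_at T r \<bullet> x = 0}"
    by (rule aff_dim_subset)
  then show ?thesis
    using affine_independent_edge_sums[OF assms(2-7)] aff_dim_translation_eq[of "avec F" ?S] by linarith
qed

lemma defines_facet_cvec_at:
  assumes "T \<ge> 5" "r \<in> {1, 2, 3}"
  shows "defines_facet T (cvec_at T r)"
proof -
  let ?F = "{x \<in> PT T. cvec_at T r \<bullet> x = 0}"
  define p q where "p = (if r = 1 then 2 else 1 :: nat)" and "q = (if r = 3 then 2 else 3 :: nat)"
  have pq: "p \<in> {1, 2, 3}" "q \<in> {1, 2, 3}" "p \<noteq> q" "p \<noteq> r" "q \<noteq> r"
    using assms(2) by (auto simp: p_def q_def)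
  have nonneg: "cvec_at T r \<bullet> avec w \<ge> 0" if "w \<in> Omega T" for w
    using inner_cvec_at_avec[OF that _ assms(2)] assms(1) by simp
  define v where "v = r # q # r # alternating p q (T - 4) @ [r]"
  have "T - 4 \<ge> 1" "T - 4 + 4 = T"
    using assms(1) by simp_all
  then have v: "v \<in> Omega T"
    using word_in_Omega[of "T - 4" r q r p q r] pq assms(2) by (simp add: v_def insert_commute)
  then have "cvec_at T r \<bullet> avec v \<noteq> 0"
    using inner_cvec_at_avec[OF v _ assms(2)] assms(1) by (simp add: v_def)
  moreover have dim_F: "4 \<le> aff_dim ?F"
    using aff_dim_cvec_at_face_ge[OF assms(1) pq(1,2) assms(2) pq(3-5)] .
  then have "?F \<noteq> {}"
    using aff_dim_empty[of ?F] by linarith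
  moreover have "aff_dim (PT T) \<le> aff_dim ?F + 1"
    using aff_dim_PT_le[of T] assms(1) dim_F by simp
  ultimately have "?F facet_of PT T"
    unfolding PT_def using nonneg v
    by (intro facet_of_convex_hull_supporting_hyperplane[of _ _ "avec v"]) (auto simp flip: PT_def)
  with nonneg show ?thesis
    by (simp add: defines_facet_def)
qed

theorem proposition6:
  fixes T :: nat and \<sigma> :: "nat \<Rightarrow> nat"
  assumes "T \<ge> 5" and "\<sigma> permutes {1, 2, 3}"
  shows "defines_facet T (pact \<sigma> (cvec T))"
proof -
  obtain r where r: "r \<in> {1, 2, 3}" "\<sigma> r = 1"
    using permutes_image[OF assms(2)] by (metis imageE insertI1)
  have "pact \<sigma> (cvec T) = cvec_at T r"
    using pact_cvec_at[OF assms(2), of T r] by (simp add: cvec_eq_cvec_at r(2))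
  then show ?thesis
    using defines_facet_cvec_at[OF assms(1) r(1)] by simp
qed

end
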